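(* Let $\mathfrak g=\mathfrak{osp}(m|2n)\cong\mathfrak{spo}(2n|m)$ and let $\Phi$ be the composition of $\mathfrak g$-module morphisms $$\mathfrak g\wedge\mathfrak g\otimes\mathfrak g\hookrightarrow\mathfrak g\otimes\mathfrak g\otimes\mathfrak g\xrightarrow{\ \mathrm{id}\otimes\Pi_2\ }\mathfrak g\otimes(\mathfrak g\circledcirc_2\mathfrak g),$$ where $\Pi_2(X\otimes Y)=X\circledcirc_2Y$. Then $\dim\mathrm{Hom}_{\mathfrak g}(\mathfrak g,\ker\Phi)\ge1$.
   Context: Conventions: $\mathbb C^{m|2n}$ with parity $[a]=0$ for $a\le m$, else $1$; orthosymplectic metric $g_{ab}$ (invertible, even, $g_{ba}=(-1)^{[a][b]}g_{ab}$), $g^{ab}=g_{ab}$, raising/lowering by $V_a=\sum_bg_{ab}V^b$, $V^c=\sum_ag^{ac}V_a$; standing assumption $m>4$, $n>1$. $\mathfrak g$ = tensors $A^{ab}=-(-1)^{[a][b]}A^{ba}$; $\mathfrak g\otimes\mathfrak g$ = tensors $T^{abcd}$ super-antisymmetric in $(a,b)$ and $(c,d)$; $\mathfrak g\odot\mathfrak g$ (resp. $\mathfrak g\wedge\mathfrak g$) those with $T^{abcd}=\pm(-1)^{([a]+[b])([c]+[d])}T^{cdab}$ (sign $+$, resp. $-$). Let $s$ be the supersymmetrization $s(T)^{abcd}=\frac12(T^{abcd}+(-1)^{([a]+[b])([c]+[d])}T^{cdab})$ and $q(V)^{abcd}=\frac13(V^{abcd}+(-1)^{[a]([b]+[c])}V^{bcad}-(-1)^{[b][c]}V^{acbd})$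 on $\mathfrak g\odot\mathfrak g$; $q$ is a $\mathfrak g$-equivariant idempotent. The second Cartan product is $\mathfrak g\circledcirc_2\mathfrak g=\mathrm{Im}(q)$ (the irreducible module of highest weight $4\delta_1$ for the standard positive system, i.e. the Cartan product in $\mathfrak{spo}(2n|m)\otimes\mathfrak{spo}(2n|m)$), and $X\circledcirc_2Y:=q(s(X\otimes Y))$, the projection along $\ker q\oplus\mathfrak g\wedge\mathfrak g$. *)

theory Defs
  imports Complex_Main
begin

text \<open>Super vector space C^(m|2n) with basis indices 0..<m+2n; index a is even iff a < m.
  Tensors are functions from index lists to complex numbers (components T^(a1...ak)),
  representing sum T^(a1..ak) e_a1 (x) ... (x) e_ak.\<close>

definition dimV :: "nat \<Rightarrow> nat \<Rightarrow> nat" where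
  "dimV m n = m + 2 * n"

definition par :: "nat \<Rightarrow> nat \<Rightarrow> nat" where
  "par m a = (if a < m then 0 else 1)"

definition psum :: "nat \<Rightarrow> nat list \<Rightarrow> nat" where
  "psum m xs = sum_list (map (par m) xs)"

definition sg :: "nat \<Rightarrow> complex" where
  "sg k = (-1) ^ k"

text \<open>Orthosymplectic metric g_ab: even, graded symmetric, and g^ab = g_ab is its inverse
  (raising after lowering is the identity).\<close>
definition osp_metric :: "nat \<Rightarrow> nat \<Rightarrow> (nat \<Rightarrow> nat \<Rightarrow> complex) \<Rightarrow> bool" where
  "osp_metric m n G \<longleftrightarrow>
     (\<forall>a b. (dimV m n \<le> a \<or> dimV m n \<le> b \<or> par m a \<noteq> par m b) \<longrightarrow> G a b = 0) \<and>
     (\<forall>a b. G b a = sg (par m a * par m b) * G a b) \<and>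
     (\<forall>b c. b < dimV m n \<longrightarrow> c < dimV m n \<longrightarrow>
        (\<Sum>a<dimV m n. G a c * G a b) = (if c = b then 1 else 0))"

definition is_tensor :: "nat \<Rightarrow> nat \<Rightarrow> nat \<Rightarrow> (nat list \<Rightarrow> complex) \<Rightarrow> bool" where
  "is_tensor m n k T \<longleftrightarrow>
     (\<forall>xs. T xs \<noteq> 0 \<longrightarrow> length xs = k \<and> (\<forall>x\<in>set xs. x < dimV m n))"

definition homog :: "nat \<Rightarrow> nat \<Rightarrow> (nat list \<Rightarrow> complex) \<Rightarrow> bool" where
  "homog m p T \<longleftrightarrow> (\<forall>xs. T xs \<noteq> 0 \<longrightarrow> psum m xs mod 2 = p)"

text \<open>The Lie superalgebra g = osp(m|2n): super-antisymmetric 2-tensors A^ab.\<close>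
definition in_g :: "nat \<Rightarrow> nat \<Rightarrow> (nat list \<Rightarrow> complex) \<Rightarrow> bool" where
  "in_g m n A \<longleftrightarrow> is_tensor m n 2 A \<and>
     (\<forall>a b. A [a, b] = - sg (par m a * par m b) * A [b, a])"

text \<open>Natural action of A (a 2-tensor, acting on V by e_d \<mapsto> sum A^ab g_bd e_a) on k-tensors,
  extended to tensor powers with Koszul signs.\<close>
definition act :: "nat \<Rightarrow> nat \<Rightarrow> (nat \<Rightarrow> nat \<Rightarrow> complex) \<Rightarrow> (nat list \<Rightarrow> complex)
    \<Rightarrow> (nat list \<Rightarrow> complex) \<Rightarrow> (nat list \<Rightarrow> complex)" where
  "act m n G A T = (\<lambda>xs. \<Sum>i<length xs. \<Sum>b<dimV m n. \<Sum>d<dimV m n.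
      A [xs ! i, b] * G b d * sg ((par m (xs ! i) + par m b) * psum m (take i xs)) * T (xs[i := d]))"

text \<open>(g wedge g) tensor g, as 6-tensors T^(abcdef).\<close>
definition in_wedge_g :: "nat \<Rightarrow> nat \<Rightarrow> (nat list \<Rightarrow> complex) \<Rightarrow> bool" where
  "in_wedge_g m n T \<longleftrightarrow> is_tensor m n 6 T \<and>
     (\<forall>a b c d e f.
        T [a,b,c,d,e,f] = - sg (par m a * par m b) * T [b,a,c,d,e,f] \<and>
        T [a,b,c,d,e,f] = - sg (par m c * par m d) * T [a,b,d,c,e,f] \<and>
        T [a,b,c,d,e,f] = - sg (par m e * par m f) * T [a,b,c,d,f,e] \<and>
        T [a,b,c,d,e,f] = - sg ((par m a + par m b) * (par m c + par m d)) * T [c,d,a,b,e,f])"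

definition s_op :: "nat \<Rightarrow> (nat list \<Rightarrow> complex) \<Rightarrow> (nat list \<Rightarrow> complex)" where
  "s_op m T = (\<lambda>xs. case xs of
      [a,b,c,d] \<Rightarrow> (T [a,b,c,d] + sg ((par m a + par m b) * (par m c + par m d)) * T [c,d,a,b]) / 2
    | _ \<Rightarrow> 0)"

definition q_op :: "nat \<Rightarrow> (nat list \<Rightarrow> complex) \<Rightarrow> (nat list \<Rightarrow> complex)" where
  "q_op m V = (\<lambda>xs. case xs of
      [a,b,c,d] \<Rightarrow> (V [a,b,c,d] + sg (par m a * (par m b + par m c)) * V [b,c,a,d]
                    - sg (par m b * par m c) * V [a,c,b,d]) / 3
    | _ \<Rightarrow> 0)"

definition Pi2 :: "nat \<Rightarrow> (nat list \<Rightarrow> complex) \<Rightarrow> (nat list \<Rightarrow> complex)" where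
  "Pi2 m T = q_op m (s_op m T)"

definition Phi :: "nat \<Rightarrow> (nat list \<Rightarrow> complex) \<Rightarrow> (nat list \<Rightarrow> complex)" where
  "Phi m T = (\<lambda>xs. case xs of
      [e,f,a,b,c,d] \<Rightarrow> Pi2 m (\<lambda>ys. T (e # f # ys)) [a,b,c,d]
    | _ \<Rightarrow> 0)"

definition ker_Phi :: "nat \<Rightarrow> nat \<Rightarrow> (nat list \<Rightarrow> complex) \<Rightarrow> bool" where
  "ker_Phi m n T \<longleftrightarrow> in_wedge_g m n T \<and> Phi m T = (\<lambda>_. 0)"

text \<open>Hom_g(g, ker Phi): even linear g-equivariant maps from g to ker Phi
  (values of F outside g are irrelevant).\<close>
definition Hom_g_ker_Phi :: "nat \<Rightarrow> nat \<Rightarrow> (nat \<Rightarrow> nat \<Rightarrow> complex)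
    \<Rightarrow> ((nat list \<Rightarrow> complex) \<Rightarrow> (nat list \<Rightarrow> complex)) set" where
  "Hom_g_ker_Phi m n G = {F.
     (\<forall>X Y. in_g m n X \<longrightarrow> in_g m n Y \<longrightarrow> F (\<lambda>xs. X xs + Y xs) = (\<lambda>xs. F X xs + F Y xs)) \<and>
     (\<forall>X c. in_g m n X \<longrightarrow> F (\<lambda>xs. c * X xs) = (\<lambda>xs. c * F X xs)) \<and>
     (\<forall>X. in_g m n X \<longrightarrow> ker_Phi m n (F X)) \<and>
     (\<forall>X p. in_g m n X \<longrightarrow> homog m p X \<longrightarrow> homog m p (F X)) \<and>
     (\<forall>A X. in_g m n A \<longrightarrow> in_g m n X \<longrightarrow> F (act m n G A X) = act m n G A (F X))}"

end

theory Submission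
  imports Defs "HOL-Library.Multiset"
begin

(* We exhibit an explicit nonzero g-equivariant map Psi : g -> ker Phi.  For X in g, Psi(X)
   is a fixed linear combination of graded permutations of the 6-tensor g (x) g (x) X, where g
   is the metric viewed as a 2-tensor.  In the purely even case it reads
     Psi(X)^abcdef = Alt(g^ac g^be X^df) + 4 (g^ae g^bf - g^af g^be) X^cd
                                         - 4 (g^ce g^df - g^cf g^de) X^ab,
   Alt being the signed 16-term sum over a<->b, c<->d, e<->f and (ab)<->(cd). *)

lemma sg_if: "sg k = (if even k then 1 else -1)"
  by (simp add: sg_def)

lemma sg_add: "sg (a + b) = sg a * sg b"
  by (simp add: sg_def power_add)

lemma sg_nonzero [simp]: "sg k \<noteq> 0"
  by (simp add: sg_def)

lemma sg_square: "sg p * sg p = 1"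
  by (simp add: sg_def power_mult_distrib[symmetric])

lemma sg_cancel: "sg q * a * (sg q * c) = a * c"
proof -
  have "sg q * a * (sg q * c) = (sg q * sg q) * (a * c)" by (simp only: mult_ac)
  thus ?thesis by (simp add: sg_square)
qed

lemma sg_even_shift: "even P1 \<Longrightarrow> sg (q * (P1 + P2)) = sg (q * P2)"
  by (simp add: sg_if algebra_simps)

lemma par_le1: "par m a \<le> 1"
  by (simp add: par_def)

lemma sg_par_square: "sg (par m a * par m a) = sg (par m a)"
  by (cases "par m a") (auto simp: par_def split: if_splits)

text \<open>The Koszul sign identities behind moving a generator of g past a graded flip
  (used for the two positions that the flip exchanges).\<close>
lemma koszul_flip_left: "pb \<le> 1 \<Longrightarrow> px \<le> 1 \<Longrightarrow> py \<le> 1 \<Longrightarrow>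
   sg ((px + pb) * P) * sg (pb * py) = sg (px * py) * sg ((px + pb) * (P + py))"
  by (cases "even P"; cases pb; cases px; cases py; simp add: sg_if algebra_simps)

lemma koszul_flip_right: "pb \<le> 1 \<Longrightarrow> px \<le> 1 \<Longrightarrow> py \<le> 1 \<Longrightarrow>
   sg ((py + pb) * (P + px)) * sg (px * pb) = sg (px * py) * sg ((py + pb) * P)"
  by (cases "even P"; cases pb; cases px; cases py; simp add: sg_if algebra_simps)

text \<open>The sign identity making the metric g-invariant.\<close>
lemma sg_metric_invariance: "sg (a * b) * (sg ((a + b) * b) * sg b) = 1"
proof -
  have e: "a * b + (a + b) * b + b = 2 * (a * b) + b * (b + 1)" by (simp add: algebra_simps)
  have "even (a * b + (a + b) * b + b)" unfolding e by simp
  hence "sg (a * b + (a + b) * b + b) = 1" by (simp add: sg_if)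
  thus ?thesis by (simp add: sg_add mult.assoc)
qed

lemma psum_append: "psum m (xs @ ys) = psum m xs + psum m ys"
  by (simp add: psum_def)

lemma psum_mset: "mset xs = mset ys \<Longrightarrow> psum m xs = psum m ys"
  unfolding psum_def by (metis mset_map sum_mset_sum_list)

lemma osp_metric_support:
  "osp_metric m n G \<Longrightarrow> G a b \<noteq> 0 \<Longrightarrow> a < dimV m n \<and> b < dimV m n \<and> par m a = par m b"
  unfolding osp_metric_def by (metis not_le)

lemma osp_metric_parity_zero: "osp_metric m n G \<Longrightarrow> par m u \<noteq> par m v \<Longrightarrow> G u v = 0"
  using osp_metric_support by blast

lemma osp_metric_sym: "osp_metric m n G \<Longrightarrow> G b a = sg (par m a * par m b) * G a b"
  unfolding osp_metric_def by blast

lemma osp_metric_inverse: "osp_metric m n G \<Longrightarrow> b < dimV m n \<Longrightarrow> c < dimV m n \<Longrightarrow>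
   (\<Sum>a<dimV m n. G a c * G a b) = (if c = b then 1 else 0)"
  unfolding osp_metric_def by blast

lemma osp_metric_column_nonzero:
  assumes G: "osp_metric m n G" and c: "c < dimV m n"
  shows "\<exists>a. G a c \<noteq> 0"
proof (rule ccontr)
  assume "\<not> (\<exists>a. G a c \<noteq> 0)"
  hence "(\<Sum>a<dimV m n. G a c * G a c) = 0" by simp
  thus False using osp_metric_inverse[OF G c c] by simp
qed

lemma metric_contract_rows:
  assumes G: "osp_metric m n G" and b: "b < dimV m n"
  shows "(\<Sum>d<dimV m n. G b d * G y d) = (if b = y then 1 else 0)"
proof (cases "y < dimV m n")
  case False
  hence "G y d = 0" for d using osp_metric_support[OF G] by blast
  then show ?thesis using False b by auto
next
  case True
  have pointwise: "G b d * G y d = G d b * G d y" for d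
  proof (cases "G b d * G y d = 0")
    case True
    then show ?thesis using osp_metric_sym[OF G, of b d] osp_metric_sym[OF G, of y d] by auto
  next
    case False
    hence p: "par m b = par m d" "par m y = par m d"
      using osp_metric_support[OF G, of b d] osp_metric_support[OF G, of y d] by auto
    show ?thesis unfolding osp_metric_sym[OF G, of b d] osp_metric_sym[OF G, of y d] p
      by (rule sg_cancel)
  qed
  have "(\<Sum>d<dimV m n. G b d * G y d) = (\<Sum>d<dimV m n. G d b * G d y)"
    by (intro sum.cong refl pointwise)
  also have "\<dots> = (if b = y then 1 else 0)" using osp_metric_inverse[OF G True b] by simp
  finally show ?thesis .
qed

lemma metric_contract_chain:
  assumes G: "osp_metric m n G" and b: "b < dimV m n"
  shows "(\<Sum>d<dimV m n. G b d * G d x) = (if b = x then sg (par m b) else 0)"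
proof (cases "x < dimV m n")
  case False
  hence "G d x = 0" for d using osp_metric_support[OF G] by blast
  then show ?thesis using False b by auto
next
  case True
  have pointwise: "G b d * G d x = sg (par m b) * (G d b * G d x)" for d
  proof (cases "G b d = 0")
    case True
    then show ?thesis using osp_metric_sym[OF G, of b d] by auto
  next
    case False
    hence p: "par m d = par m b" using osp_metric_support[OF G, of b d] by auto
    show ?thesis unfolding osp_metric_sym[OF G, of b d] p sg_par_square by simp
  qed
  have "(\<Sum>d<dimV m n. G b d * G d x) = (\<Sum>d<dimV m n. sg (par m b) * (G d b * G d x))"
    by (intro sum.cong refl pointwise)
  also have "\<dots> = (if b = x then sg (par m b) else 0)" using osp_metric_inverse[OF G True b]
    by (simp add: sum_distrib_left[symmetric])
  finally show ?thesis .
qed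

lemma in_g_tensor: "in_g m n X \<Longrightarrow> is_tensor m n 2 X"
  unfolding in_g_def by blast

lemma in_g_antisym: "in_g m n X \<Longrightarrow> X [u, v] = - sg (par m u * par m v) * X [v, u]"
  unfolding in_g_def by blast

definition act_term :: "nat \<Rightarrow> nat \<Rightarrow> (nat \<Rightarrow> nat \<Rightarrow> complex) \<Rightarrow> (nat list \<Rightarrow> complex)
    \<Rightarrow> (nat list \<Rightarrow> complex) \<Rightarrow> nat list \<Rightarrow> nat \<Rightarrow> complex" where
  "act_term m n G A T xs i = (\<Sum>b<dimV m n. \<Sum>d<dimV m n.
      A [xs ! i, b] * G b d * sg ((par m (xs ! i) + par m b) * psum m (take i xs)) * T (xs[i := d]))"

lemma act_as_sum: "act m n G A T xs = (\<Sum>i<length xs. act_term m n G A T xs i)"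
  by (simp add: act_def act_term_def)

lemma act_add: "act m n G A (\<lambda>xs. S xs + T xs) = (\<lambda>xs. act m n G A S xs + act m n G A T xs)"
  unfolding act_def by (simp add: algebra_simps sum.distrib)

lemma act_smult: "act m n G A (\<lambda>xs. c * T xs) = (\<lambda>xs. c * act m n G A T xs)"
  unfolding act_def by (simp add: algebra_simps sum_distrib_left)

lemma act_zero: "act m n G A (\<lambda>xs. 0) = (\<lambda>xs. 0)"
  unfolding act_def by simp

section \<open>Graded transpositions of adjacent tensor factors\<close>

definition swap_adj :: "nat \<Rightarrow> nat list \<Rightarrow> nat list" where
  "swap_adj i xs = xs[i := xs ! Suc i, Suc i := xs ! i]"

definition flip :: "nat \<Rightarrow> nat \<Rightarrow> (nat list \<Rightarrow> complex) \<Rightarrow> nat list \<Rightarrow> complex" where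
  "flip m i T xs = (if Suc i < length xs
     then sg (par m (xs ! i) * par m (xs ! Suc i)) * T (swap_adj i xs) else T xs)"

lemma length_swap_adj [simp]: "length (swap_adj i xs) = length xs"
  by (simp add: swap_adj_def)

lemma mset_swap_adj: "Suc i < length xs \<Longrightarrow> mset (swap_adj i xs) = mset xs"
  unfolding swap_adj_def by (metis Suc_lessD mset_swap)

lemma psum_take_swap_adj:
  assumes "Suc i < length xs" "j \<noteq> Suc i"
  shows "psum m (take j (swap_adj i xs)) = psum m (take j xs)"
proof (cases "j \<le> i")
  case True
  then show ?thesis using assms by (simp add: swap_adj_def take_update_cancel)
next
  case False
  hence j: "Suc (Suc i) \<le> j" using assms by simp
  have "take j (swap_adj i xs) = swap_adj i (take j xs)"
    using assms j by (simp add: swap_adj_def take_update_swap nth_take)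
  moreover have "mset (swap_adj i (take j xs)) = mset (take j xs)"
    using assms j by (intro mset_swap_adj) simp
  ultimately show ?thesis by (metis psum_mset)
qed

lemma act_term_flip_away:
  assumes i: "Suc i < length xs" and j: "j \<noteq> i" "j \<noteq> Suc i" "j < length xs"
  shows "act_term m n G A (flip m i T) xs j
       = sg (par m (xs ! i) * par m (xs ! Suc i)) * act_term m n G A T (swap_adj i xs) j"
proof -
  let ?ys = "swap_adj i xs"
  have "flip m i T (xs[j := d]) = sg (par m (xs ! i) * par m (xs ! Suc i)) * T (?ys[j := d])" for d
    using i j by (simp add: flip_def swap_adj_def list_update_swap)
  moreover have "?ys ! j = xs ! j" using i j by (simp add: swap_adj_def)
  moreover have "psum m (take j ?ys) = psum m (take j xs)" using i j psum_take_swap_adj by simp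
  ultimately show ?thesis
    unfolding act_term_def by (simp add: sum_distrib_left algebra_simps)
qed

lemma act_term_flip_first:
  assumes Gp: "\<And>b d. G b d \<noteq> 0 \<Longrightarrow> par m b = par m d" and i: "Suc i < length xs"
  shows "act_term m n G A (flip m i T) xs i
       = sg (par m (xs ! i) * par m (xs ! Suc i)) * act_term m n G A T (swap_adj i xs) (Suc i)"
proof -
  let ?ys = "swap_adj i xs" and ?x = "xs ! i" and ?y = "xs ! Suc i" and ?P = "psum m (take i xs)"
  have flip_at: "flip m i T (xs[i := d]) = sg (par m d * par m ?y) * T (?ys[Suc i := d])" for d
    using i by (simp add: flip_def swap_adj_def list_update_swap)
  have entry: "?ys ! Suc i = ?x" using i by (simp add: swap_adj_def)
  have "take (Suc i) ?ys = take i xs @ [?y]"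
    using i by (simp add: swap_adj_def take_Suc_conv_app_nth)
  hence prefix: "psum m (take (Suc i) ?ys) = ?P + par m ?y" by (simp add: psum_def)
  have summand: "A [?x, b] * G b d * sg ((par m ?x + par m b) * ?P) * (sg (par m d * par m ?y) * T (?ys[Suc i := d]))
      = sg (par m ?x * par m ?y) *
        (A [?x, b] * G b d * sg ((par m ?x + par m b) * (?P + par m ?y)) * T (?ys[Suc i := d]))" for b d
  proof (cases "G b d = 0")
    case False
    hence "par m d = par m b" using Gp by simp
    thus ?thesis using koszul_flip_left[where pb="par m b" and px="par m ?x" and py="par m ?y"
        and P="?P", OF par_le1 par_le1 par_le1]
      by (simp add: algebra_simps)
  qed simp
  show ?thesis unfolding act_term_def flip_at entry prefix sum_distrib_left
    by (intro sum.cong refl summand)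
qed

lemma act_term_flip_second:
  assumes Gp: "\<And>b d. G b d \<noteq> 0 \<Longrightarrow> par m b = par m d" and i: "Suc i < length xs"
  shows "act_term m n G A (flip m i T) xs (Suc i)
       = sg (par m (xs ! i) * par m (xs ! Suc i)) * act_term m n G A T (swap_adj i xs) i"
proof -
  let ?ys = "swap_adj i xs" and ?x = "xs ! i" and ?y = "xs ! Suc i" and ?P = "psum m (take i xs)"
  have flip_at: "flip m i T (xs[Suc i := d]) = sg (par m ?x * par m d) * T (?ys[i := d])" for d
    using i by (simp add: flip_def swap_adj_def list_update_swap)
  have entry: "?ys ! i = ?y" using i by (simp add: swap_adj_def)
  have "take (Suc i) xs = take i xs @ [?x]" using i by (simp add: take_Suc_conv_app_nth)
  hence prefix: "psum m (take (Suc i) xs) = ?P + par m ?x" by (simp add: psum_def)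
  have prefix': "psum m (take i ?ys) = ?P" using i psum_take_swap_adj by simp
  have summand: "A [?y, b] * G b d * sg ((par m ?y + par m b) * (?P + par m ?x)) * (sg (par m ?x * par m d) * T (?ys[i := d]))
      = sg (par m ?x * par m ?y) *
        (A [?y, b] * G b d * sg ((par m ?y + par m b) * ?P) * T (?ys[i := d]))" for b d
  proof (cases "G b d = 0")
    case False
    hence "par m d = par m b" using Gp by simp
    thus ?thesis using koszul_flip_right[where pb="par m b" and px="par m ?x" and py="par m ?y"
        and P="?P", OF par_le1 par_le1 par_le1]
      by (simp add: algebra_simps)
  qed simp
  show ?thesis unfolding act_term_def flip_at entry prefix prefix' sum_distrib_left
    by (intro sum.cong refl summand)
qed

lemma sum_split_adjacent:
  "Suc i < L \<Longrightarrow> sum h {..<L} = h i + h (Suc i) + sum h ({..<L} - {i, Suc i})"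
proof -
  assume a: "Suc i < L"
  have "sum h {..<L} = h i + sum h ({..<L} - {i})" using a by (intro sum.remove) auto
  moreover have "sum h ({..<L} - {i}) = h (Suc i) + sum h ({..<L} - {i} - {Suc i})"
    using a by (intro sum.remove) auto
  moreover have "{..<L} - {i} - {Suc i} = {..<L} - {i, Suc i}" by auto
  ultimately show ?thesis by (simp add: add.assoc)
qed

lemma act_flip:
  assumes Gp: "\<And>b d. G b d \<noteq> 0 \<Longrightarrow> par m b = par m d"
  shows "act m n G A (flip m i T) = flip m i (act m n G A T)"
proof (rule ext)
  fix xs
  show "act m n G A (flip m i T) xs = flip m i (act m n G A T) xs"
  proof (cases "Suc i < length xs")
    case False
    then show ?thesis by (simp add: act_def flip_def)
  next
    case True
    let ?s = "sg (par m (xs ! i) * par m (xs ! Suc i))" and ?ys = "swap_adj i xs"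
    have "act m n G A (flip m i T) xs = (\<Sum>j<length xs. ?s * act_term m n G A T ?ys j)"
      unfolding act_as_sum sum_split_adjacent[OF True, of "act_term m n G A (flip m i T) xs"]
        sum_split_adjacent[OF True, of "\<lambda>j. ?s * act_term m n G A T ?ys j"]
      using act_term_flip_away[OF True] act_term_flip_first[OF Gp True]
        act_term_flip_second[OF Gp True]
      by simp
    also have "\<dots> = flip m i (act m n G A T) xs"
      using True by (simp add: flip_def act_as_sum sum_distrib_left)
    finally show ?thesis .
  qed
qed

text \<open>Composites of graded flips; the list [i1, ..., ik] acts as flip i1 after ... after flip ik.\<close>
fun flips :: "nat \<Rightarrow> nat list \<Rightarrow> (nat list \<Rightarrow> complex) \<Rightarrow> nat list \<Rightarrow> complex" where
  "flips m [] T = T"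
| "flips m (i # is) T = flip m i (flips m is T)"

lemma act_flips:
  assumes Gp: "\<And>b d. G b d \<noteq> 0 \<Longrightarrow> par m b = par m d"
  shows "act m n G A (flips m is T) = flips m is (act m n G A T)"
  by (induction "is") (simp_all add: act_flip[OF Gp])

lemma flips_monomial: "\<exists>c ys. (\<forall>T. flips m is T xs = c * T ys) \<and> mset ys = mset xs"
proof (induction "is" arbitrary: xs)
  case Nil
  show ?case by (rule exI[of _ 1], rule exI[of _ xs]) simp
next
  case (Cons i "is")
  show ?case
  proof (cases "Suc i < length xs")
    case True
    obtain c ys where "\<forall>T. flips m is T (swap_adj i xs) = c * T ys" "mset ys = mset (swap_adj i xs)"
      using Cons by blast
    then show ?thesis using True mset_swap_adj[OF True]
      by (intro exI[of _ "sg (par m (xs ! i) * par m (xs ! Suc i)) * c"] exI[of _ ys])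
        (simp add: flip_def)
  next
    case False
    then show ?thesis using Cons by (simp add: flip_def)
  qed
qed

lemma flips_add: "flips m is (\<lambda>xs. S xs + T xs) xs = flips m is S xs + flips m is T xs"
proof -
  obtain c ys where "\<forall>T. flips m is T xs = c * T ys" using flips_monomial by blast
  thus ?thesis by (simp add: algebra_simps)
qed

lemma flips_smult: "flips m is (\<lambda>xs. k * T xs) xs = k * flips m is T xs"
proof -
  obtain c ys where "\<forall>T. flips m is T xs = c * T ys" using flips_monomial by blast
  thus ?thesis by (simp add: algebra_simps)
qed

section \<open>Tensor products and the invariance of the metric\<close>

definition tprod :: "(nat list \<Rightarrow> complex) \<Rightarrow> nat \<Rightarrow> (nat list \<Rightarrow> complex) \<Rightarrow> nat list \<Rightarrow> complex" where
  "tprod S k T xs = S (take k xs) * T (drop k xs)"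

lemma act_term_tprod_left:
  assumes "length us = k" "j < k"
  shows "act_term m n G A (tprod S k T) (us @ vs) j = act_term m n G A S us j * T vs"
  unfolding act_term_def tprod_def using assms
  by (simp add: nth_append list_update_append1 sum_distrib_left sum_distrib_right mult_ac)

text \<open>Acting on a factor of the right tensor factor T of S (x) T; the Koszul sign of
  passing S is trivial because S is even.\<close>
lemma act_term_tprod_right:
  assumes us: "length us = k" and Se: "S us \<noteq> 0 \<Longrightarrow> even (psum m us)"
  shows "act_term m n G A (tprod S k T) (us @ vs) (k + j) = S us * act_term m n G A T vs j"
proof (cases "S us = 0")
  case True
  then show ?thesis using us by (simp add: act_term_def tprod_def list_update_append)
next
  case False
  hence "even (psum m us)" by (rule Se)
  hence shift: "sg ((psum m us + P) * q) = sg (P * q)" for P q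
    using sg_even_shift by (simp add: mult.commute)
  show ?thesis using us unfolding act_term_def tprod_def
    by (simp add: nth_append list_update_append psum_append shift sum_distrib_left mult_ac)
qed

lemma sum_lessThan_add: "(\<Sum>j<k + (l::nat). f j) = (\<Sum>j<k. f j) + (\<Sum>j<l. f (k + j))"
  by (induction l) (simp_all add: add.assoc)

lemma act_tprod:
  assumes Sk: "\<And>ys. S ys \<noteq> 0 \<Longrightarrow> length ys = k"
    and Se: "\<And>ys. S ys \<noteq> 0 \<Longrightarrow> even (psum m ys)"
  shows "act m n G A (tprod S k T) = (\<lambda>xs. tprod (act m n G A S) k T xs + tprod S k (act m n G A T) xs)"
proof (rule ext)
  fix xs
  show "act m n G A (tprod S k T) xs = tprod (act m n G A S) k T xs + tprod S k (act m n G A T) xs"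
  proof (cases "length xs < k")
    case True
    hence "S (take k (xs[j := d])) = 0" for j d using Sk by fastforce
    then show ?thesis using True by (simp add: act_def tprod_def)
  next
    case False
    obtain us vs where xs: "xs = us @ vs" and us: "length us = k"
      using False by (metis append_take_drop_id le_less_linear length_take min_absorb2)
    have "act m n G A (tprod S k T) xs = (\<Sum>j<k. act_term m n G A (tprod S k T) xs j)
        + (\<Sum>j<length vs. act_term m n G A (tprod S k T) xs (k + j))"
      unfolding act_as_sum xs length_append us sum_lessThan_add ..
    also have "\<dots> = (\<Sum>j<k. act_term m n G A S us j * T vs) + (\<Sum>j<length vs. S us * act_term m n G A T vs j)"
      unfolding xs using act_term_tprod_left[OF us] act_term_tprod_right[OF us Se] by simp
    also have "\<dots> = tprod (act m n G A S) k T xs + tprod S k (act m n G A T) xs"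
      by (simp add: tprod_def act_as_sum xs us sum_distrib_left sum_distrib_right)
    finally show ?thesis .
  qed
qed

text \<open>The metric as the 2-tensor g^xy = G y x (the element of V (x) V it defines).\<close>
definition metric_tensor :: "(nat \<Rightarrow> nat \<Rightarrow> complex) \<Rightarrow> nat list \<Rightarrow> complex" where
  "metric_tensor G xs = (case xs of [x, y] \<Rightarrow> G y x | _ \<Rightarrow> 0)"

lemma metric_tensor_length: "metric_tensor G ys \<noteq> 0 \<Longrightarrow> length ys = 2"
  unfolding metric_tensor_def by (auto split: list.splits)

lemma metric_tensor_indices:
  "osp_metric m n G \<Longrightarrow> metric_tensor G ys \<noteq> 0 \<Longrightarrow> \<forall>x\<in>set ys. x < dimV m n"
  unfolding metric_tensor_def using osp_metric_support[of m n G] by (auto split: list.splits)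

lemma metric_tensor_even:
  assumes G: "osp_metric m n G" and h: "metric_tensor G ys \<noteq> 0"
  shows "even (psum m ys)"
proof -
  obtain x y where ys: "ys = [x, y]" and g: "G y x \<noteq> 0"
    using h unfolding metric_tensor_def by (auto split: list.splits)
  have "par m y = par m x" using osp_metric_support[OF G g] by simp
  thus ?thesis by (simp add: ys psum_def)
qed

lemma act_term_metric_tensor_first:
  assumes G: "osp_metric m n G"
  shows "act_term m n G A (metric_tensor G) [x, y] 0 = (if y < dimV m n then A [x, y] else 0)"
proof -
  have "act_term m n G A (metric_tensor G) [x, y] 0 = (\<Sum>b<dimV m n. A [x, b] * (if b = y then 1 else 0))"
    unfolding act_term_def
  proof (intro sum.cong refl)
    fix b assume b: "b \<in> {..<dimV m n}"
    have "(\<Sum>d<dimV m n. A [[x, y] ! 0, b] * G b d * sg ((par m ([x, y] ! 0) + par m b) * psum m (take 0 [x, y]))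
        * metric_tensor G ([x, y][0 := d])) = A [x, b] * (\<Sum>d<dimV m n. G b d * G y d)"
      by (simp add: metric_tensor_def psum_def sg_def sum_distrib_left mult.assoc)
    also have "\<dots> = A [x, b] * (if b = y then 1 else 0)" using metric_contract_rows[OF G] b by simp
    finally show "(\<Sum>d<dimV m n. A [[x, y] ! 0, b] * G b d * sg ((par m ([x, y] ! 0) + par m b) * psum m (take 0 [x, y]))
        * metric_tensor G ([x, y][0 := d])) = A [x, b] * (if b = y then 1 else 0)" .
  qed
  thus ?thesis by (simp add: if_distrib sum.delta' cong: if_cong)
qed

lemma act_term_metric_tensor_second:
  assumes G: "osp_metric m n G"
  shows "act_term m n G A (metric_tensor G) [x, y] 1
    = (if x < dimV m n then A [y, x] * sg ((par m y + par m x) * par m x) * sg (par m x) else 0)"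
proof -
  have "act_term m n G A (metric_tensor G) [x, y] 1
      = (\<Sum>b<dimV m n. A [y, b] * sg ((par m y + par m b) * par m x) * (if b = x then sg (par m b) else 0))"
    unfolding act_term_def
  proof (intro sum.cong refl)
    fix b assume b: "b \<in> {..<dimV m n}"
    have "(\<Sum>d<dimV m n. A [[x, y] ! 1, b] * G b d * sg ((par m ([x, y] ! 1) + par m b) * psum m (take 1 [x, y]))
        * metric_tensor G ([x, y][1 := d]))
      = A [y, b] * sg ((par m y + par m b) * par m x) * (\<Sum>d<dimV m n. G b d * G d x)"
      by (simp add: metric_tensor_def psum_def sum_distrib_left mult_ac)
    also have "\<dots> = A [y, b] * sg ((par m y + par m b) * par m x) * (if b = x then sg (par m b) else 0)"
      using metric_contract_chain[OF G] b by simp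
    finally show "(\<Sum>d<dimV m n. A [[x, y] ! 1, b] * G b d * sg ((par m ([x, y] ! 1) + par m b) * psum m (take 1 [x, y]))
        * metric_tensor G ([x, y][1 := d]))
      = A [y, b] * sg ((par m y + par m b) * par m x) * (if b = x then sg (par m b) else 0)" .
  qed
  thus ?thesis by (simp add: if_distrib sum.delta' cong: if_cong)
qed

lemma act_metric_tensor:
  assumes G: "osp_metric m n G" and A: "in_g m n A"
  shows "act m n G A (metric_tensor G) = (\<lambda>_. 0)"
proof (rule ext)
  fix xs
  show "act m n G A (metric_tensor G) xs = 0"
  proof (cases "length xs = 2")
    case False
    hence "metric_tensor G (xs[j := d]) = 0" for j d using metric_tensor_length by fastforce
    then show ?thesis by (simp add: act_def)
  next
    case True
    then obtain x y where xs: "xs = [x, y]" by (auto simp: length_Suc_conv numeral_2_eq_2)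
    have A_supp: "A [a, b] \<noteq> 0 \<Longrightarrow> a < dimV m n \<and> b < dimV m n" for a b
      using in_g_tensor[OF A] unfolding is_tensor_def by (metis list.set_intros(1,2) set_ConsD)
    have "act m n G A (metric_tensor G) xs
        = (if y < dimV m n then A [x, y] else 0)
        + (if x < dimV m n then A [y, x] * sg ((par m y + par m x) * par m x) * sg (par m x) else 0)"
      unfolding act_as_sum xs
      by (simp add: numeral_2_eq_2 act_term_metric_tensor_first[OF G]
                    act_term_metric_tensor_second[OF G, simplified])
    also have "\<dots> = 0"
    proof (cases "x < dimV m n \<and> y < dimV m n")
      case True
      then show ?thesis using in_g_antisym[OF A, of y x] sg_metric_invariance[of "par m y" "par m x"]
        by (simp add: algebra_simps)
    next
      case False
      then show ?thesis using A_supp by auto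
    qed
    finally show ?thesis .
  qed
qed

section \<open>Combinations of permuted copies of g (x) g (x) X\<close>

definition gg_tensor :: "(nat \<Rightarrow> nat \<Rightarrow> complex) \<Rightarrow> (nat list \<Rightarrow> complex) \<Rightarrow> nat list \<Rightarrow> complex" where
  "gg_tensor G X = tprod (metric_tensor G) 2 (tprod (metric_tensor G) 2 X)"

lemma act_gg_tensor:
  assumes G: "osp_metric m n G" and A: "in_g m n A"
  shows "act m n G A (gg_tensor G X) = gg_tensor G (act m n G A X)"
proof -
  have "act m n G A (tprod (metric_tensor G) 2 T) = tprod (metric_tensor G) 2 (act m n G A T)" for T
  proof -
    have "act m n G A (tprod (metric_tensor G) 2 T) = (\<lambda>xs. tprod (act m n G A (metric_tensor G)) 2 T xs
        + tprod (metric_tensor G) 2 (act m n G A T) xs)"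
      by (rule act_tprod[OF metric_tensor_length metric_tensor_even[OF G]])
    thus ?thesis unfolding act_metric_tensor[OF G A] by (simp add: tprod_def fun_eq_iff)
  qed
  thus ?thesis unfolding gg_tensor_def by simp
qed

lemma gg_tensor_add: "gg_tensor G (\<lambda>xs. X xs + Y xs) = (\<lambda>xs. gg_tensor G X xs + gg_tensor G Y xs)"
  unfolding gg_tensor_def tprod_def by (simp add: algebra_simps)

lemma gg_tensor_smult: "gg_tensor G (\<lambda>xs. k * X xs) = (\<lambda>xs. k * gg_tensor G X xs)"
  unfolding gg_tensor_def tprod_def by (simp add: algebra_simps)

lemma gg_tensor_support:
  assumes "gg_tensor G X ys \<noteq> 0"
  shows "metric_tensor G (take 2 ys) \<noteq> 0" "metric_tensor G (take 2 (drop 2 ys)) \<noteq> 0"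
    "X (drop 2 (drop 2 ys)) \<noteq> 0"
  using assms unfolding gg_tensor_def tprod_def by auto

lemma split3: "ys = take 2 ys @ take 2 (drop 2 ys) @ drop 2 (drop 2 ys)"
  by (simp only: append_take_drop_id)

definition perm_comb :: "nat \<Rightarrow> (complex \<times> nat list) list \<Rightarrow> (nat \<Rightarrow> nat \<Rightarrow> complex)
    \<Rightarrow> (nat list \<Rightarrow> complex) \<Rightarrow> nat list \<Rightarrow> complex" where
  "perm_comb m L G X = (\<lambda>xs. sum_list (map (\<lambda>(c, is). c * flips m is (gg_tensor G X) xs) L))"

lemma act_perm_comb:
  assumes G: "osp_metric m n G" and A: "in_g m n A"
  shows "act m n G A (perm_comb m L G X) = perm_comb m L G (act m n G A X)"
proof (induction L)
  case Nil
  then show ?case by (simp add: perm_comb_def act_zero)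
next
  case (Cons a L)
  obtain c "is" where a: "a = (c, is)" by (cases a)
  have Gp: "\<And>b d. G b d \<noteq> 0 \<Longrightarrow> par m b = par m d" using osp_metric_support[OF G] by blast
  have "perm_comb m (a # L) G Y = (\<lambda>xs. c * flips m is (gg_tensor G Y) xs + perm_comb m L G Y xs)" for Y
    by (simp add: perm_comb_def a)
  then show ?case using Cons
    by (simp add: act_add act_smult act_flips[OF Gp] act_gg_tensor[OF G A])
qed

lemma perm_comb_add: "perm_comb m L G (\<lambda>xs. X xs + Y xs) = (\<lambda>xs. perm_comb m L G X xs + perm_comb m L G Y xs)"
  by (rule ext, induction L) (auto simp: perm_comb_def gg_tensor_add flips_add algebra_simps)

lemma perm_comb_smult: "perm_comb m L G (\<lambda>xs. k * X xs) = (\<lambda>xs. k * perm_comb m L G X xs)"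
  by (rule ext, induction L) (auto simp: perm_comb_def gg_tensor_smult flips_smult algebra_simps)

lemma perm_comb_support:
  assumes F: "perm_comb m L G X xs \<noteq> 0"
    and W: "\<And>ys. gg_tensor G X ys \<noteq> 0 \<Longrightarrow> P ys"
    and Pm: "\<And>xs ys. mset xs = mset ys \<Longrightarrow> P ys \<Longrightarrow> P xs"
  shows "P xs"
  using F
proof (induction L)
  case Nil
  then show ?case by (simp add: perm_comb_def)
next
  case (Cons a L)
  obtain c "is" where a: "a = (c, is)" by (cases a)
  have sum_nz: "c * flips m is (gg_tensor G X) xs + perm_comb m L G X xs \<noteq> 0"
    using Cons.prems by (simp add: perm_comb_def a)
  show ?case
  proof (cases "perm_comb m L G X xs = 0")
    case True
    obtain k ys where k: "\<forall>T. flips m is T xs = k * T ys" and ys: "mset ys = mset xs"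
      using flips_monomial by blast
    have "gg_tensor G X ys \<noteq> 0" using sum_nz True k by auto
    thus ?thesis using W Pm ys by metis
  next
    case False
    then show ?thesis using Cons.IH by blast
  qed
qed

lemma perm_comb_tensor:
  assumes G: "osp_metric m n G" and h: "is_tensor m n 2 X"
  shows "is_tensor m n 6 (perm_comb m L G X)"
  unfolding is_tensor_def
proof (intro allI impI)
  fix xs assume "perm_comb m L G X xs \<noteq> 0"
  then show "length xs = 6 \<and> (\<forall>x\<in>set xs. x < dimV m n)"
  proof (rule perm_comb_support)
    fix ys assume w: "gg_tensor G X ys \<noteq> 0"
    have "length (take 2 ys) = 2" "length (take 2 (drop 2 ys)) = 2"
      using metric_tensor_length gg_tensor_support(1,2)[OF w] by blast+
    moreover have "\<forall>x\<in>set (take 2 ys) \<union> set (take 2 (drop 2 ys)). x < dimV m n"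
      using metric_tensor_indices[OF G] gg_tensor_support(1,2)[OF w] by blast
    moreover have "length (drop 2 (drop 2 ys)) = 2 \<and> (\<forall>x\<in>set (drop 2 (drop 2 ys)). x < dimV m n)"
      using h gg_tensor_support(3)[OF w] unfolding is_tensor_def by blast
    ultimately show "length ys = 6 \<and> (\<forall>x\<in>set ys. x < dimV m n)"
      by (subst (1 2) split3) auto
  next
    fix xs ys :: "nat list" assume "mset xs = mset ys" "length ys = 6 \<and> (\<forall>x\<in>set ys. x < dimV m n)"
    then show "length xs = 6 \<and> (\<forall>x\<in>set xs. x < dimV m n)"
      by (metis mset_eq_length set_mset_mset)
  qed
qed

lemma perm_comb_homog:
  assumes G: "osp_metric m n G" and h: "homog m p X"
  shows "homog m p (perm_comb m L G X)"
  unfolding homog_def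
proof (intro allI impI)
  fix xs assume "perm_comb m L G X xs \<noteq> 0"
  then show "psum m xs mod 2 = p"
  proof (rule perm_comb_support)
    fix ys assume w: "gg_tensor G X ys \<noteq> 0"
    have "even (psum m (take 2 ys))" "even (psum m (take 2 (drop 2 ys)))"
      using metric_tensor_even[OF G] gg_tensor_support(1,2)[OF w] by blast+
    moreover have "psum m (drop 2 (drop 2 ys)) mod 2 = p"
      using h gg_tensor_support(3)[OF w] unfolding homog_def by blast
    moreover have "psum m ys = psum m (take 2 ys) + psum m (take 2 (drop 2 ys)) + psum m (drop 2 (drop 2 ys))"
      by (subst split3) (simp add: psum_append)
    ultimately show "psum m ys mod 2 = p" by (auto elim!: evenE simp: mod_add_left_eq[symmetric])
  next
    fix xs ys :: "nat list" assume "mset xs = mset ys" "psum m ys mod 2 = p"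
    then show "psum m xs mod 2 = p" using psum_mset by metis
  qed
qed

section \<open>The map Psi\<close>

text \<open>The coefficients and composite flips defining Psi (see the formula in the header).\<close>
definition Psi_word :: "(complex \<times> nat list) list" where
  "Psi_word = [(1, [1,3]), (-1, [1,4,3]), (-1, [1,2,3]), (1, [1,2,4,3]), (-1, [2,1,3]),
    (1, [2,1,4,3]), (1, [1,2,1,3]), (-1, [1,2,1,4,3]), (-1, [3,2,1]), (1, [2,3,2,1]),
    (4, [3,2,1,4,3]), (1, [4,3,2,1]), (-1, [2,4,3,2,1]), (-4, [3,2,4,3,2,1]), (1, [0,1,2,3]),
    (-1, [0,1,2,4,3]), (-1, [0,1,2,1,3]), (1, [0,1,2,1,4,3]), (-4, [1,0,2,1,3,2,1,4,3]),
    (4, [1,0,2,1,3,2,4,3,2,1])]"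

definition Psi :: "nat \<Rightarrow> (nat \<Rightarrow> nat \<Rightarrow> complex) \<Rightarrow> (nat list \<Rightarrow> complex) \<Rightarrow> nat list \<Rightarrow> complex" where
  "Psi m G = perm_comb m Psi_word G"

text \<open>Each component of Psi(X) is an explicit sum of 20 products of two metric entries and one
  entry of X.  Once the parities of the six indices are fixed, the identities below follow by
  bringing every metric entry and every entry of X into a fixed orientation, using the graded
  symmetry of the metric, the graded antisymmetry of X, and the vanishing of the metric between
  indices of different parity.\<close>
context
  fixes m n :: nat and G :: "nat \<Rightarrow> nat \<Rightarrow> complex" and X :: "nat list \<Rightarrow> complex"
    and a b c d e f :: nat
  assumes G: "osp_metric m n G"
    and X_antisym: "\<And>u v. X [u, v] = - sg (par m u * par m v) * X [v, u]"
begin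

private lemmas orientation =
  osp_metric_sym[OF G, of b a] osp_metric_sym[OF G, of c a] osp_metric_sym[OF G, of d a]
  osp_metric_sym[OF G, of e a] osp_metric_sym[OF G, of f a] osp_metric_sym[OF G, of c b]
  osp_metric_sym[OF G, of d b] osp_metric_sym[OF G, of e b] osp_metric_sym[OF G, of f b]
  osp_metric_sym[OF G, of d c] osp_metric_sym[OF G, of e c] osp_metric_sym[OF G, of f c]
  osp_metric_sym[OF G, of e d] osp_metric_sym[OF G, of f d] osp_metric_sym[OF G, of f e]
  X_antisym[of b a] X_antisym[of c a] X_antisym[of d a] X_antisym[of e a] X_antisym[of f a]
  X_antisym[of c b] X_antisym[of d b] X_antisym[of e b] X_antisym[of f b] X_antisym[of d c]
  X_antisym[of e c] X_antisym[of f c] X_antisym[of e d] X_antisym[of f d] X_antisym[of f e]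
  osp_metric_parity_zero[OF G, of a b] osp_metric_parity_zero[OF G, of a c]
  osp_metric_parity_zero[OF G, of a d] osp_metric_parity_zero[OF G, of a e]
  osp_metric_parity_zero[OF G, of a f] osp_metric_parity_zero[OF G, of b c]
  osp_metric_parity_zero[OF G, of b d] osp_metric_parity_zero[OF G, of b e]
  osp_metric_parity_zero[OF G, of b f] osp_metric_parity_zero[OF G, of c d]
  osp_metric_parity_zero[OF G, of c e] osp_metric_parity_zero[OF G, of c f]
  osp_metric_parity_zero[OF G, of d e] osp_metric_parity_zero[OF G, of d f]
  osp_metric_parity_zero[OF G, of e f]

private lemmas Psi_unfold = Psi_def perm_comb_def Psi_word_def gg_tensor_def tprod_def metric_tensor_def

lemma Psi_wedge_symmetries:
  "Psi m G X [a,b,c,d,e,f] = - sg (par m a * par m b) * Psi m G X [b,a,c,d,e,f] \<and>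
   Psi m G X [a,b,c,d,e,f] = - sg (par m c * par m d) * Psi m G X [a,b,d,c,e,f] \<and>
   Psi m G X [a,b,c,d,e,f] = - sg (par m e * par m f) * Psi m G X [a,b,c,d,f,e] \<and>
   Psi m G X [a,b,c,d,e,f] = - sg ((par m a + par m b) * (par m c + par m d)) * Psi m G X [c,d,a,b,e,f]"
  unfolding Psi_unfold
  apply (simp add: flip_def swap_adj_def)
  apply (cases "a < m"; cases "b < m"; cases "c < m"; cases "d < m"; cases "e < m"; cases "f < m")
  by (simp_all add: par_def sg_def orientation)

lemma Pi2_Psi: "q_op m (s_op m (\<lambda>ys. Psi m G X (e # f # ys))) [a,b,c,d] = 0"
  unfolding q_op_def s_op_def Psi_unfold
  apply (simp add: flip_def swap_adj_def)
  apply (cases "a < m"; cases "b < m"; cases "c < m"; cases "d < m"; cases "e < m"; cases "f < m")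
   apply (simp_all add: par_def sg_def orientation)
  by (simp_all add: field_simps algebra_simps)

end

lemma Psi_ker_Phi:
  assumes G: "osp_metric m n G" and X: "in_g m n X"
  shows "ker_Phi m n (Psi m G X)"
  unfolding ker_Phi_def in_wedge_g_def
proof (intro conjI)
  show "is_tensor m n 6 (Psi m G X)"
    unfolding Psi_def by (rule perm_comb_tensor[OF G in_g_tensor[OF X]])
  show "Phi m (Psi m G X) = (\<lambda>_. 0)"
    unfolding Phi_def Pi2_def by (auto split: list.splits simp: Pi2_Psi[OF G in_g_antisym[OF X]])
qed (intro allI Psi_wedge_symmetries[OF G in_g_antisym[OF X]])

lemma Psi_in_Hom: "osp_metric m n G \<Longrightarrow> Psi m G \<in> Hom_g_ker_Phi m n G"
  unfolding Hom_g_ker_Phi_def Psi_def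
  by (auto simp: perm_comb_add perm_comb_smult Psi_ker_Phi[unfolded Psi_def]
                 perm_comb_homog act_perm_comb)

text \<open>A component of Psi(e_u /\ e_v) that survives: the only one of the 20 terms contributing to
  it is g^{0e} g^{mf} X^{uv}, with e and f chosen so that these metric entries are nonzero.\<close>
lemma Psi_component_nonzero:
  assumes G: "osp_metric m n G" and m: "0 < m"
    and idx: "u < m" "v < m" "e < m" "m \<le> f" "u \<noteq> v" "u \<noteq> 0" "v \<noteq> 0" "u \<noteq> e" "v \<noteq> e"
    and ge: "G e 0 \<noteq> 0" and gf: "G f m \<noteq> 0"
    and X: "X = (\<lambda>xs. if xs = [u, v] then 1 else if xs = [v, u] then -1 else 0)"
  shows "Psi m G X [u, v, 0, m, e, f] \<noteq> 0"
proof -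
  have p: "par m u = 0" "par m v = 0" "par m e = 0" "par m 0 = 0" "par m m = 1" "par m f = 1"
    using idx m by (auto simp: par_def)
  show ?thesis
    unfolding Psi_def perm_comb_def Psi_word_def gg_tensor_def tprod_def metric_tensor_def
    using idx m ge gf by (simp add: flip_def swap_adj_def X p sg_def osp_metric_parity_zero[OF G])
qed

lemma even_wedge_in_g:
  assumes "u < m" "v < m" "u \<noteq> v" "m < dimV m n"
  shows "in_g m n (\<lambda>xs. if xs = [u, v] then 1 else if xs = [v, u] then -1 else 0)"
  using assms unfolding in_g_def is_tensor_def by (auto simp: par_def sg_def)

theorem lemma6p1:
  fixes m n :: nat and G :: "nat \<Rightarrow> nat \<Rightarrow> complex"
  assumes "m > 4" and "n > 1" and "osp_metric m n G"
  shows "\<exists>F \<in> Hom_g_ker_Phi m n G. \<exists>X. in_g m n X \<and> F X \<noteq> (\<lambda>_. 0)"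
proof -
  note G = assms(3)
  have dim: "0 < dimV m n" "m < dimV m n" using assms(2) by (simp_all add: dimV_def)
  obtain e where ge: "G e 0 \<noteq> 0" using osp_metric_column_nonzero[OF G dim(1)] by blast
  have e: "e < m" using osp_metric_support[OF G ge] assms(1) by (auto simp: par_def split: if_splits)
  obtain f where gf: "G f m \<noteq> 0" using osp_metric_column_nonzero[OF G dim(2)] by blast
  have f: "m \<le> f" using osp_metric_support[OF G gf] by (auto simp: par_def split: if_splits)
  have "\<exists>u\<in>{1, 2, 3}. \<exists>v\<in>{1, 2, 3::nat}. u \<noteq> v \<and> u \<noteq> e \<and> v \<noteq> e" by auto
  then obtain u v where "u \<in> {1, 2, 3}" "v \<in> {1, 2, 3}" "u \<noteq> v" "u \<noteq> e" "v \<noteq> e" by blast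
  hence uv: "u < m" "v < m" "u \<noteq> v" "u \<noteq> 0" "v \<noteq> 0" "u \<noteq> e" "v \<noteq> e"
    using assms(1) by auto
  define X where "X = (\<lambda>xs :: nat list. if xs = [u, v] then (1::complex) else if xs = [v, u] then -1 else 0)"
  have "in_g m n X" unfolding X_def using even_wedge_in_g uv dim by blast
  moreover have "Psi m G X [u, v, 0, m, e, f] \<noteq> 0"
    using Psi_component_nonzero[OF G _ uv(1,2) e f uv(3-7) ge gf X_def] assms(1) by simp
  ultimately show ?thesis using Psi_in_Hom[OF G] by metis
qed

end
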